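(* Let $n\ge3$. Let $(\mu,\Sigma)$ satisfy the normalization below, with $\operatorname{Tr}(\Sigma)=n$, and the observability assumption with parameter $\gamma\in(0,1)$. Then for every $i\in[n]$, $$\Sigma_{ii}\le\frac{100\log(8/\gamma)}{\gamma^2}.$$
   Context: Probit model: utilities $X\sim\mathcal{N}(\mu,\Sigma)$ with $\mu\in\mathbb{R}^n$ and $\Sigma$ symmetric positive semidefinite. Normalization: $\langle\mu,\mathbf 1\rangle=0$, $\Sigma\mathbf1=0$, $\operatorname{Tr}(\Sigma)=n$, and $\operatorname{rank}(\Sigma)=n-1$. Observability assumption: for all pairwise distinct $i,j,k\in[n]$, $\Pr\{X_i>X_j>X_k\}\ge\gamma$. $\log$ is the natural logarithm. *)

theory Defs
  imports "HOL-Analysis.Analysis" "HOL-Probability.Probability"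
begin

definition std_gaussian :: "(real^'n::finite) measure" where
  "std_gaussian = density lborel (\<lambda>z. ennreal (\<Prod>i\<in>UNIV. std_normal_density (z $ i)))"

text \<open>Law of X = mu + A Z with Z standard Gaussian; this is N(mu, A A^T).
  Every N(mu, Sigma) with Sigma PSD arises this way (A any matrix with A A^T = Sigma),
  and the law depends only on A A^T.\<close>
definition gaussian_vec :: "real^'n \<Rightarrow> real^'n^'n \<Rightarrow> (real^'n::finite) measure" where
  "gaussian_vec mu A = distr std_gaussian borel (\<lambda>z. mu + A *v z)"

end

theory Submission imports Defs begin

text \<open>Write \<open>X = mu + A Z\<close>, so that \<open>Sigma i i = \<parallel>A i\<parallel>\<^sup>2\<close> and each difference \<open>X p - X q\<close> is
  normal with standard deviation \<open>\<parallel>A p - A q\<parallel>\<close>. As the trace is \<open>n\<close>, at least three rows have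
  \<open>\<parallel>A l\<parallel>\<^sup>2 \<le> 3\<close>; take two of them, \<open>j\<close> and \<open>k\<close>, other than \<open>i\<close>, and let \<open>W = X j - X k\<close> and
  \<open>V = X i - X k\<close> have standard deviations \<open>\<tau> \<le> 4\<close> and \<open>\<sigma>\<close>. The ranking \<open>k > j > i\<close> gives
  \<open>P(W < 0) \<ge> \<gamma>\<close>, which by the Gaussian tail bound caps the mean of \<open>W\<close> at
  \<open>\<tau> sqrt(2 ln(1/\<gamma>))\<close>; hence \<open>W\<close> exceeds \<open>t = 2 \<tau> sqrt(2 ln(2/\<gamma>))\<close> with probability at
  most \<open>\<gamma>/2\<close>. The ranking \<open>j > i > k\<close> gives \<open>P(0 < V < W) \<ge> \<gamma>\<close>, hence
  \<open>P(0 < V \<le> t) \<ge> \<gamma>/2\<close>; as the density of \<open>V\<close> is at most \<open>1/(\<sigma> sqrt(2\<pi>))\<close>, this bounds \<open>\<sigma>\<close>,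
  and \<open>\<parallel>A i\<parallel> \<le> \<sigma> + 2\<close>.\<close>

lemma density_PiM_prod:
  fixes f :: "'a \<Rightarrow> ennreal" and I :: "'i set"
  assumes I: "finite I" and f[measurable]: "f \<in> borel_measurable M"
    and M: "sigma_finite_measure M" and Mf: "sigma_finite_measure (density M f)"
  shows "density (PiM I (\<lambda>_. M)) (\<lambda>x. \<Prod>i\<in>I. f (x i)) = PiM I (\<lambda>_. density M f)"
proof -
  interpret Mf: product_sigma_finite "\<lambda>_::'i. density M f" using Mf by (simp add: product_sigma_finite_def)
  interpret M: product_sigma_finite "\<lambda>_::'i. M" using M by (simp add: product_sigma_finite_def)
  show ?thesis
  proof (rule Mf.PiM_eqI[OF I])
    show "sets (density (PiM I (\<lambda>_. M)) (\<lambda>x. \<Prod>i\<in>I. f (x i))) = sets (PiM I (\<lambda>_. density M f))"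
      unfolding sets_density by (rule sets_PiM_cong) auto
  next
    fix A assume A: "\<And>i. i \<in> I \<Longrightarrow> A i \<in> sets (density M f)"
    then have A': "\<And>i. i \<in> I \<Longrightarrow> A i \<in> sets M" by simp
    have "emeasure (density (PiM I (\<lambda>_. M)) (\<lambda>x. \<Prod>i\<in>I. f (x i))) (Pi\<^sub>E I A)
        = (\<integral>\<^sup>+ x. (\<Prod>i\<in>I. f (x i)) * indicator (Pi\<^sub>E I A) x \<partial>PiM I (\<lambda>_. M))"
      using A' I by (subst emeasure_density) (auto intro!: sets_PiM_I_finite)
    also have "\<dots> = (\<integral>\<^sup>+ x. (\<Prod>i\<in>I. f (x i) * indicator (A i) (x i)) \<partial>PiM I (\<lambda>_. M))"
    proof (intro nn_integral_cong)
      fix x assume "x \<in> space (PiM I (\<lambda>_. M))"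
      then have "x \<in> extensional I" by (simp add: space_PiM PiE_def)
      then have "indicator (Pi\<^sub>E I A) x = (\<Prod>i\<in>I. indicator (A i) (x i) :: ennreal)"
        using I by (auto simp: indicator_def PiE_iff)
      then show "(\<Prod>i\<in>I. f (x i)) * indicator (Pi\<^sub>E I A) x = (\<Prod>i\<in>I. f (x i) * indicator (A i) (x i))"
        by (simp add: prod.distrib)
    qed
    also have "\<dots> = (\<Prod>i\<in>I. \<integral>\<^sup>+ y. f y * indicator (A i) y \<partial>M)"
      using A' I by (intro M.product_nn_integral_prod[where f = "\<lambda>i y. f y * indicator (A i) y"]) simp_all
    also have "\<dots> = (\<Prod>i\<in>I. emeasure (density M f) (A i))"
      using A' by (intro prod.cong refl) (simp add: emeasure_density)
    finally show "emeasure (density (PiM I (\<lambda>_. M)) (\<lambda>x. \<Prod>i\<in>I. f (x i))) (Pi\<^sub>E I A)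
        = (\<Prod>i\<in>I. emeasure (density M f) (A i))" .
  qed
qed

abbreviation std_normal_measure :: "real measure" where
  "std_normal_measure \<equiv> density lborel std_normal_density"

lemma Basis_vec_eq_range_axis: "(Basis :: (real^'n) set) = range (\<lambda>i. axis i 1)"
  by (auto simp: Basis_vec_def)

lemma inj_axis_1: "inj (\<lambda>i::'n::finite. axis i (1::real))"
  by (auto simp: inj_def axis_eq_axis)

lemma sum_Basis_vec_nth:
  fixes f :: "real^'n \<Rightarrow> real"
  shows "(\<Sum>b\<in>Basis. f b * b $ i) = f (axis i 1)"
  unfolding Basis_vec_eq_range_axis sum.reindex[OF inj_axis_1]
  by (simp add: axis_def if_distrib[of "(*) _"] cong: if_cong)

lemma std_gaussian_eq_distr_PiM:
  "(std_gaussian :: (real^'n) measure) =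
     distr (PiM Basis (\<lambda>_. std_normal_measure)) borel (\<lambda>f. \<Sum>b\<in>Basis. f b *\<^sub>R b)"
proof -
  let ?T = "\<lambda>f. \<Sum>b\<in>(Basis::(real^'n) set). f b *\<^sub>R b"
  let ?g = "\<lambda>z::real^'n. ennreal (\<Prod>i\<in>UNIV. std_normal_density (z $ i))"
  have "std_gaussian = density (distr (PiM Basis (\<lambda>_. lborel)) borel ?T) ?g"
    unfolding std_gaussian_def by (subst lborel_eq) simp
  also have "\<dots> = distr (density (PiM Basis (\<lambda>_. lborel)) (\<lambda>f. ?g (?T f))) borel ?T"
    by (rule density_distr) auto
  also have "(\<lambda>f. ?g (?T f)) = (\<lambda>f. \<Prod>b\<in>Basis. ennreal (std_normal_density (f b)))"
  proof
    fix f :: "real^'n \<Rightarrow> real"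
    have "(\<Prod>i\<in>UNIV. std_normal_density (?T f $ i)) = (\<Prod>b\<in>Basis. std_normal_density (f b))"
      by (simp add: sum_Basis_vec_nth) (simp add: Basis_vec_eq_range_axis prod.reindex[OF inj_axis_1])
    then show "?g (?T f) = (\<Prod>b\<in>Basis. ennreal (std_normal_density (f b)))"
      by (simp add: prod_ennreal)
  qed
  also have "density (PiM Basis (\<lambda>_. lborel)) (\<lambda>f. \<Prod>b\<in>Basis. ennreal (std_normal_density (f b)))
      = PiM (Basis :: (real^'n) set) (\<lambda>_. std_normal_measure)"
    using prob_space_normal_density[of 1 0]
    by (intro density_PiM_prod)
      (auto simp: prob_space_imp_sigma_finite lborel.sigma_finite_measure_axioms)
  finally show ?thesis .
qed

lemma indep_vars_PiM_components:
  assumes I: "finite I" "I \<noteq> {}" and M: "\<And>i. i \<in> I \<Longrightarrow> prob_space (M i)"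
  shows "prob_space.indep_vars (PiM I M) M (\<lambda>i x. x i) I"
proof -
  interpret P: prob_space "PiM I M" using I M by (intro prob_space_PiM) auto
  have "distr (PiM I M) (PiM I M) (\<lambda>x. \<lambda>i\<in>I. x i) = distr (PiM I M) (PiM I M) (\<lambda>x. x)"
    by (rule distr_cong) (auto simp: space_PiM PiE_def extensional_restrict)
  also have "\<dots> = PiM I M"
    by (rule distr_id)
  also have "\<dots> = PiM I (\<lambda>i. distr (PiM I M) (M i) (\<lambda>x. x i))"
    using M by (intro PiM_cong refl) (simp add: distr_PiM_component)
  finally show ?thesis
    using I by (subst P.indep_vars_iff_distr_eq_PiM') auto
qed

lemma distributed_PiM_std_normal_component:
  assumes "i \<in> I"
  shows "distributed (PiM I (\<lambda>_. std_normal_measure)) lborel (\<lambda>x. x i) std_normal_density"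
proof -
  have "distr (PiM I (\<lambda>_. std_normal_measure)) lborel (\<lambda>x. x i)
      = distr (PiM I (\<lambda>_. std_normal_measure)) std_normal_measure (\<lambda>x. x i)"
    by (rule distr_cong) auto
  also have "\<dots> = std_normal_measure"
    using assms prob_space_normal_density[of 1 0] by (intro distr_PiM_component) auto
  finally show ?thesis
    using assms by (auto simp: distributed_def measurable_cong_sets[OF _ sets_lborel])
qed

lemma distributed_weighted_sum_PiM_std_normal:
  fixes c :: "'i \<Rightarrow> real"
  assumes I: "finite I" and c: "\<exists>i\<in>I. c i \<noteq> 0"
  shows "distributed (PiM I (\<lambda>_. std_normal_measure)) lborel (\<lambda>x. \<Sum>i\<in>I. c i * x i)
           (normal_density 0 (sqrt (\<Sum>i\<in>I. (c i)\<^sup>2)))"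
proof -
  interpret P: prob_space "PiM I (\<lambda>_. std_normal_measure)"
    using I prob_space_normal_density[of 1 0] by (intro prob_space_PiM) auto
  define J where "J = {i\<in>I. c i \<noteq> 0}"
  have J: "finite J" "J \<noteq> {}" "J \<subseteq> I"
    using I c by (auto simp: J_def)
  have "P.indep_vars (\<lambda>_. std_normal_measure) (\<lambda>i x. x i) J"
    using J I prob_space_normal_density[of 1 0]
    by (intro P.indep_vars_subset[OF indep_vars_PiM_components]) auto
  then have indep: "P.indep_vars (\<lambda>_. borel) (\<lambda>i x. c i * x i) J"
    by (rule P.indep_vars_compose2) auto
  have "distributed (PiM I (\<lambda>_. std_normal_measure)) lborel (\<lambda>x. c i * x i) (normal_density 0 \<bar>c i\<bar>)"
    if "i \<in> J" for i
  proof -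
    have "i \<in> I" "c i \<noteq> 0" using that by (auto simp: J_def)
    from P.normal_density_affine[OF distributed_PiM_std_normal_component[OF this(1)] _ this(2), of 0]
    show ?thesis by simp
  qed
  then have "distributed (PiM I (\<lambda>_. std_normal_measure)) lborel (\<lambda>x. \<Sum>i\<in>J. c i * x i)
      (normal_density (\<Sum>i\<in>J. 0) (sqrt (\<Sum>i\<in>J. \<bar>c i\<bar>\<^sup>2)))"
    using J indep by (intro P.sum_indep_normal) (auto simp: J_def)
  moreover have "(\<Sum>i\<in>J. c i * x i) = (\<Sum>i\<in>I. c i * x i)" for x
    unfolding J_def using I by (intro sum.mono_neutral_left) auto
  moreover have "(\<Sum>i\<in>J. \<bar>c i\<bar>\<^sup>2) = (\<Sum>i\<in>I. (c i)\<^sup>2)"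
    unfolding J_def using I by (intro sum.mono_neutral_cong_left) auto
  ultimately show ?thesis by simp
qed

lemma prob_space_std_gaussian: "prob_space std_gaussian"
  unfolding std_gaussian_eq_distr_PiM
  using prob_space_normal_density[of 1 0]
  by (intro prob_space.prob_space_distr prob_space_PiM) auto

lemma borel_measurable_affine_vec:
  "(\<lambda>z. mu + A *v z) \<in> borel_measurable (borel :: (real^'n) measure)"
  by (intro borel_measurable_continuous_onI continuous_intros)

lemma measurable_affine_std_gaussian:
  "(\<lambda>z. mu + A *v z) \<in> measurable (std_gaussian :: (real^'n) measure) borel"
  using borel_measurable_affine_vec by (simp add: std_gaussian_def)

lemma prob_space_gaussian_vec: "prob_space (gaussian_vec mu A)"
  unfolding gaussian_vec_def
  by (rule prob_space.prob_space_distr[OF prob_space_std_gaussian measurable_affine_std_gaussian])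

lemma sets_gaussian_vec [simp]: "sets (gaussian_vec mu A) = sets borel"
  by (simp add: gaussian_vec_def)

lemma space_gaussian_vec [simp]: "space (gaussian_vec mu A) = UNIV"
  by (simp add: gaussian_vec_def)

lemma events_gaussian_vec_less: "{x::real^'n. x $ a < x $ b} \<in> sets (gaussian_vec mu A)"
  unfolding sets_gaussian_vec by (intro borel_open open_Collect_less continuous_intros)

lemma gaussian_vec_inner_distributed:
  fixes mu c :: "real^'n" and A :: "real^'n^'n"
  assumes a: "transpose A *v c \<noteq> 0"
  shows "distributed (gaussian_vec mu A) lborel (\<lambda>x. c \<bullet> x)
           (normal_density (c \<bullet> mu) (norm (transpose A *v c)))"
proof -
  let ?P = "PiM (Basis :: (real^'n) set) (\<lambda>_. std_normal_measure)"
  let ?T = "\<lambda>f. \<Sum>b\<in>(Basis :: (real^'n) set). f b *\<^sub>R b"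
  interpret P: prob_space ?P
    using prob_space_normal_density[of 1 0] by (intro prob_space_PiM) auto
  define a where "a = transpose A *v c"
  have "\<exists>b\<in>Basis. a \<bullet> b \<noteq> 0"
    using a euclidean_all_zero_iff[of a] unfolding a_def by blast
  from distributed_weighted_sum_PiM_std_normal[OF finite_Basis this]
  have "distributed ?P lborel (\<lambda>f. \<Sum>b\<in>Basis. (a \<bullet> b) * f b) (normal_density 0 (norm a))"
    by (simp only: norm_eq_sqrt_inner euclidean_inner[of a a] power2_eq_square)
  from P.normal_density_affine[OF this, of 1 "c \<bullet> mu"] a
  have D: "distributed ?P lborel (\<lambda>f. c \<bullet> mu + (\<Sum>b\<in>Basis. (a \<bullet> b) * f b))
      (normal_density (c \<bullet> mu) (norm a))"
    by (simp add: a_def)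
  have "c \<bullet> (mu + A *v ?T f) = c \<bullet> mu + (\<Sum>b\<in>Basis. (a \<bullet> b) * f b)" for f
  proof -
    have "c \<bullet> (A *v ?T f) = a \<bullet> ?T f"
      unfolding a_def by (simp add: dot_lmul_matrix[symmetric])
    then show ?thesis
      by (simp add: inner_add_right inner_sum_right mult.commute)
  qed
  then have "distr (gaussian_vec mu A) lborel (\<lambda>x. c \<bullet> x)
      = distr ?P lborel (\<lambda>f. c \<bullet> mu + (\<Sum>b\<in>Basis. (a \<bullet> b) * f b))"
  proof -
    note affine = borel_measurable_affine_vec[of mu A]
    have "distr (gaussian_vec mu A) lborel (\<lambda>x. c \<bullet> x)
        = distr (distr ?P borel ?T) lborel ((\<lambda>x. c \<bullet> x) \<circ> (\<lambda>z. mu + A *v z))"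
      unfolding gaussian_vec_def std_gaussian_eq_distr_PiM using affine by (intro distr_distr) auto
    also have "\<dots> = distr ?P lborel ((\<lambda>x. c \<bullet> x) \<circ> (\<lambda>z. mu + A *v z) \<circ> ?T)"
      using affine by (intro distr_distr) auto
    finally show ?thesis
      by (simp add: comp_def \<open>\<And>f. c \<bullet> (mu + A *v ?T f) = _\<close>)
  qed
  moreover have "(\<lambda>x. c \<bullet> x) \<in> borel_measurable (gaussian_vec mu A)"
    by (simp add: measurable_cong_sets[OF sets_gaussian_vec refl])
  ultimately show ?thesis
    using D unfolding distributed_def a_def by simp
qed

lemma (in prob_space) normal_upper_tail_le:
  assumes X: "distributed M lborel X (normal_density m s)" and s: "0 < s" and t: "0 \<le> t"
  shows "prob {x\<in>space M. m + t < X x} \<le> exp (- t\<^sup>2 / (2 * s\<^sup>2))"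
proof -
  let ?c = "exp (- t\<^sup>2 / (2 * s\<^sup>2))"
  have dominated: "normal_density m s x \<le> ?c * normal_density (m + t) s x" if "m + t < x" for x
  proof -
    have "t\<^sup>2 + (x - (m + t))\<^sup>2 \<le> (x - m)\<^sup>2"
      using that t mult_nonneg_nonneg[of t "x - (m + t)"] by (simp add: power2_eq_square algebra_simps)
    then have "- (x - m)\<^sup>2 / (2 * s\<^sup>2) \<le> - t\<^sup>2 / (2 * s\<^sup>2) + - (x - (m + t))\<^sup>2 / (2 * s\<^sup>2)"
      using s by (simp add: divide_simps)
    then have "exp (- (x - m)\<^sup>2 / (2 * s\<^sup>2)) \<le> ?c * exp (- (x - (m + t))\<^sup>2 / (2 * s\<^sup>2))"
      by (simp add: exp_add[symmetric])
    then show ?thesis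
      unfolding normal_density_def by (simp add: divide_right_mono)
  qed
  have "X -` {m + t<..} \<inter> space M = {x\<in>space M. m + t < X x}"
    by auto
  then have "emeasure M {x\<in>space M. m + t < X x} =
      (\<integral>\<^sup>+x. ennreal (normal_density m s x) * indicator {m + t<..} x \<partial>lborel)"
    using distributed_emeasure[OF X, of "{m + t<..}"] by simp
  also have "\<dots> \<le> (\<integral>\<^sup>+x. ennreal ?c * ennreal (normal_density (m + t) s x) \<partial>lborel)"
    using dominated
    by (intro nn_integral_mono) (auto simp: indicator_def ennreal_mult'[symmetric] intro: ennreal_leI)
  also have "\<dots> = ?c"
    using s by (simp add: nn_integral_cmult nn_integral_eq_integral)
  finally show ?thesis
    by (simp add: emeasure_eq_measure)
qed

lemma (in prob_space) normal_interval_le: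
  assumes X: "distributed M lborel X (normal_density m s)" and s: "0 < s" and ab: "a \<le> b"
  shows "prob {x\<in>space M. a < X x \<and> X x \<le> b} \<le> (b - a) / (s * sqrt (2 * pi))"
proof -
  have sup: "normal_density m s x \<le> 1 / (s * sqrt (2 * pi))" for x
    using s by (simp add: normal_density_def real_sqrt_mult divide_simps)
  have "X -` {a<..b} \<inter> space M = {x\<in>space M. a < X x \<and> X x \<le> b}"
    by auto
  then have "emeasure M {x\<in>space M. a < X x \<and> X x \<le> b} =
      (\<integral>\<^sup>+x. ennreal (normal_density m s x) * indicator {a<..b} x \<partial>lborel)"
    using distributed_emeasure[OF X, of "{a<..b}"] by simp
  also have "\<dots> \<le> (\<integral>\<^sup>+x. ennreal (1 / (s * sqrt (2 * pi))) * indicator {a<..b} x \<partial>lborel)"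
    using sup by (intro nn_integral_mono) (auto simp: indicator_def intro: ennreal_leI)
  also have "\<dots> = ennreal ((b - a) / (s * sqrt (2 * pi)))"
    using ab s by (simp add: nn_integral_cmult_indicator ennreal_mult'[symmetric])
  finally show ?thesis
    using ab s by (simp add: emeasure_eq_measure)
qed

lemma (in prob_space) normal_mean_le_of_prob_neg:
  assumes X: "distributed M lborel X (normal_density m s)" and s: "0 < s"
    and \<gamma>: "0 < \<gamma>" "\<gamma> \<le> prob {x\<in>space M. X x < 0}"
  shows "m \<le> s * sqrt (2 * ln (1 / \<gamma>))"
proof (cases "m \<le> 0")
  case True
  have "\<gamma> \<le> 1"
    using \<gamma>(2) prob_le_1 order_trans by blast
  then have "0 \<le> ln (1 / \<gamma>)"
    using \<gamma>(1) by simp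
  then show ?thesis
    using True s by (simp add: order_trans[OF _ mult_nonneg_nonneg])
next
  case False
  have "distributed M lborel (\<lambda>x. 0 + (-1) * X x) (normal_density (0 + (-1) * m) (\<bar>-1\<bar> * s))"
    using s by (intro normal_density_affine[OF X]) auto
  then have "distributed M lborel (\<lambda>x. - X x) (normal_density (- m) s)"
    by simp
  from normal_upper_tail_le[OF this s, of m] False
  have "prob {x\<in>space M. X x < 0} \<le> exp (- m\<^sup>2 / (2 * s\<^sup>2))"
    by simp
  with \<gamma> have "ln \<gamma> \<le> ln (exp (- m\<^sup>2 / (2 * s\<^sup>2)))"
    by (subst ln_le_cancel_iff) auto
  then have "ln \<gamma> \<le> - m\<^sup>2 / (2 * s\<^sup>2)"
    by simp
  then have "m\<^sup>2 \<le> s\<^sup>2 * (2 * ln (1 / \<gamma>))"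
    using s \<gamma>(1) by (simp add: ln_div field_simps)
  then have "m \<le> sqrt (s\<^sup>2 * (2 * ln (1 / \<gamma>)))"
    by (rule real_le_rsqrt)
  then show ?thesis
    using s by (simp add: real_sqrt_mult)
qed

lemma (in prob_space) prob_between_normal_le:
  assumes W: "distributed M lborel W (normal_density m \<tau>)" "0 < \<tau>"
    and V: "distributed M lborel V (normal_density m' \<sigma>)" "0 < \<sigma>"
    and t: "0 \<le> t" "0 \<le> m + t"
  shows "prob {x\<in>space M. 0 < V x \<and> V x < W x}
           \<le> exp (- t\<^sup>2 / (2 * \<tau>\<^sup>2)) + (m + t) / (\<sigma> * sqrt (2 * pi))"
proof -
  note [measurable] = distributed_measurable[OF W(1), simplified] distributed_measurable[OF V(1), simplified]
  have "prob {x\<in>space M. 0 < V x \<and> V x < W x}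
      \<le> prob ({x\<in>space M. m + t < W x} \<union> {x\<in>space M. 0 < V x \<and> V x \<le> m + t})"
    by (intro finite_measure_mono) auto
  also have "\<dots> \<le> prob {x\<in>space M. m + t < W x} + prob {x\<in>space M. 0 < V x \<and> V x \<le> m + t}"
    by (rule measure_Un_le) auto
  also have "\<dots> \<le> exp (- t\<^sup>2 / (2 * \<tau>\<^sup>2)) + (m + t) / (\<sigma> * sqrt (2 * pi))"
    using normal_upper_tail_le[OF W t(1)] normal_interval_le[OF V t(2)] by simp
  finally show ?thesis .
qed

lemma (in prob_space) normal_sd_le_of_prob_between:
  assumes W: "distributed M lborel W (normal_density m \<tau>)" and \<tau>: "0 < \<tau>"
    and V: "distributed M lborel V (normal_density m' \<sigma>)" and \<sigma>: "0 < \<sigma>"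
    and \<gamma>: "0 < \<gamma>"
    and neg: "\<gamma> \<le> prob {x\<in>space M. W x < 0}"
    and between: "\<gamma> \<le> prob {x\<in>space M. 0 < V x \<and> V x < W x}"
  shows "pi * \<gamma>\<^sup>2 * \<sigma>\<^sup>2 \<le> 16 * \<tau>\<^sup>2 * ln (2 / \<gamma>)"
proof -
  note [measurable] = distributed_measurable[OF W, simplified] distributed_measurable[OF V, simplified]
  have "\<gamma> \<le> 1"
    using neg prob_le_1 order_trans by blast
  then have ln_pos: "0 \<le> ln (1 / \<gamma>)" "ln (1 / \<gamma>) \<le> ln (2 / \<gamma>)"
    using \<gamma> by (simp_all add: divide_right_mono)
  define t where "t = \<tau> * sqrt (2 * ln (2 / \<gamma>))"
  have t: "0 \<le> t" "t\<^sup>2 = 2 * \<tau>\<^sup>2 * ln (2 / \<gamma>)"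
    using \<tau> ln_pos by (simp_all add: t_def power_mult_distrib)
  have tail: "exp (- t\<^sup>2 / (2 * \<tau>\<^sup>2)) = \<gamma> / 2"
    using \<tau> \<gamma> by (simp add: t(2) exp_minus)
  have "m \<le> \<tau> * sqrt (2 * ln (1 / \<gamma>))"
    by (rule normal_mean_le_of_prob_neg[OF W \<tau> \<gamma> neg])
  also have "\<dots> \<le> t"
    unfolding t_def using \<tau> ln_pos by (intro mult_left_mono) auto
  finally have "m \<le> t" .
  have L: "0 \<le> m + t"
  proof (rule ccontr)
    assume "\<not> 0 \<le> m + t"
    then have "prob {x\<in>space M. 0 < V x \<and> V x < W x} \<le> prob {x\<in>space M. m + t < W x}"
      by (intro finite_measure_mono) auto
    then show False
      using between normal_upper_tail_le[OF W \<tau> t(1)] tail \<gamma> by linarith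
  qed
  have "\<gamma> / 2 \<le> (m + t) / (\<sigma> * sqrt (2 * pi))"
    using between prob_between_normal_le[OF W \<tau> V \<sigma> t(1) L] tail by linarith
  then have "\<gamma> * (\<sigma> * sqrt (2 * pi)) \<le> 4 * t"
    using \<sigma> \<open>m \<le> t\<close> by (simp add: field_simps)
  then have "(\<gamma> * \<sigma> * sqrt (2 * pi))\<^sup>2 \<le> (4 * t)\<^sup>2"
    using \<gamma> \<sigma> by (intro power_mono) (simp_all add: mult.assoc)
  then show ?thesis
    by (simp add: power_mult_distrib t(2))
qed

lemma three_le_card_le_3:
  fixes f :: "'a \<Rightarrow> real"
  assumes I: "finite I" "3 \<le> card I" and f: "\<And>l. l \<in> I \<Longrightarrow> 0 \<le> f l"
    and sum: "(\<Sum>l\<in>I. f l) = card I"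
  shows "3 \<le> card {l\<in>I. f l \<le> 3}"
proof -
  let ?B = "{l\<in>I. \<not> f l \<le> 3}"
  have split: "card {l\<in>I. f l \<le> 3} + card ?B = card I"
    using I(1) by (subst card_Un_disjoint[symmetric]) (auto intro: arg_cong[where f = card])
  have "3 * card ?B < card I" if "?B \<noteq> {}"
  proof -
    have "real (3 * card ?B) = (\<Sum>l\<in>?B. 3)"
      by simp
    also have "\<dots> < (\<Sum>l\<in>?B. f l)"
      using I(1) that by (intro sum_strict_mono) auto
    also have "\<dots> \<le> (\<Sum>l\<in>I. f l)"
      using I(1) f by (intro sum_mono2) auto
    finally show ?thesis
      using sum by simp
  qed
  with split I show ?thesis
    by (cases "?B = {}") auto
qed

lemma sq_le_100_ln_div_sq:
  fixes \<gamma> \<sigma> \<tau> \<nu> :: real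
  assumes \<gamma>: "0 < \<gamma>" "\<gamma> < 1" and \<tau>: "0 \<le> \<tau>" "\<tau> \<le> 4"
    and \<nu>: "0 \<le> \<nu>" "\<nu> \<le> \<sigma> + 2"
    and sd: "pi * \<gamma>\<^sup>2 * \<sigma>\<^sup>2 \<le> 16 * \<tau>\<^sup>2 * ln (2 / \<gamma>)"
  shows "\<nu>\<^sup>2 \<le> 100 * ln (8 / \<gamma>) / \<gamma>\<^sup>2"
proof -
  define l where "l = ln (2 / \<gamma>)"
  have l: "0 \<le> l" "ln (8 / \<gamma>) = ln 4 + l"
    using \<gamma> ln_mult[of 4 "2 / \<gamma>"] by (simp_all add: l_def)
  have "1 \<le> ln (4::real)"
    using exp_le by (simp add: ln_ge_iff)
  have "\<tau>\<^sup>2 \<le> 4\<^sup>2"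
    using \<tau> by (intro power_mono)
  then have "3 * (\<gamma>\<^sup>2 * \<sigma>\<^sup>2) \<le> 256 * l"
    using sd pi_gt3 l(1) mult_right_mono[of 3 pi "\<gamma>\<^sup>2 * \<sigma>\<^sup>2"] mult_right_mono[of "\<tau>\<^sup>2" 16 l]
    unfolding l_def by (simp add: mult.assoc)
  moreover have "\<gamma>\<^sup>2 \<le> 1"
    using \<gamma> by (simp add: power_le_one)
  moreover have "\<nu>\<^sup>2 \<le> 11/10 * \<sigma>\<^sup>2 + 44"
  proof -
    have "\<nu>\<^sup>2 \<le> (\<sigma> + 2)\<^sup>2"
      using \<nu> by (intro power_mono)
    moreover have "0 \<le> (\<sigma> - 20)\<^sup>2"
      by simp
    ultimately show ?thesis
      by (simp add: power2_eq_square algebra_simps)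
  qed
  then have "\<gamma>\<^sup>2 * \<nu>\<^sup>2 \<le> 11/10 * (\<gamma>\<^sup>2 * \<sigma>\<^sup>2) + 44 * \<gamma>\<^sup>2"
    using mult_left_mono[of "\<nu>\<^sup>2" "11/10 * \<sigma>\<^sup>2 + 44" "\<gamma>\<^sup>2"] by (simp add: algebra_simps)
  ultimately have "\<gamma>\<^sup>2 * \<nu>\<^sup>2 \<le> 100 * ln (8 / \<gamma>)"
    using l \<open>1 \<le> ln 4\<close> by linarith
  then show ?thesis
    using \<gamma> by (simp add: field_simps)
qed

lemma gaussian_vec_diff_distributed:
  fixes mu :: "real^'n" and A :: "real^'n^'n"
  assumes "A $ p \<noteq> A $ q"
  shows "distributed (gaussian_vec mu A) lborel (\<lambda>x. x $ p - x $ q)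
           (normal_density (mu $ p - mu $ q) (norm (A $ p - A $ q)))"
proof -
  have "transpose A *v (axis p 1 - axis q 1) = A $ p - A $ q"
    by (simp add: vec_eq_iff matrix_vector_mult_def transpose_def axis_def right_diff_distrib
        sum_subtractf if_distrib[of "\<lambda>y. _ * y"] cong: if_cong)
  moreover have "(axis p 1 - axis q 1) \<bullet> x = x $ p - x $ q" for x :: "real^'n"
    by (simp add: inner_diff_left inner_axis')
  ultimately show ?thesis
    using gaussian_vec_inner_distributed[of A "axis p 1 - axis q 1" mu] assms by simp
qed

lemma measure_gaussian_vec_eq_0:
  fixes mu :: "real^'n" and A :: "real^'n^'n"
  assumes S: "S \<in> sets (gaussian_vec mu A)" and avoid: "\<And>z. mu + A *v z \<notin> S"
  shows "measure (gaussian_vec mu A) S = 0"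
proof -
  have "measure (gaussian_vec mu A) S = measure std_gaussian ((\<lambda>z. mu + A *v z) -` S \<inter> space std_gaussian)"
    using S unfolding gaussian_vec_def by (intro measure_distr[OF measurable_affine_std_gaussian]) simp
  also have "(\<lambda>z. mu + A *v z) -` S \<inter> space std_gaussian = {}"
    using avoid by auto
  finally show ?thesis
    by simp
qed

lemma gaussian_vec_rows_neq:
  fixes mu :: "real^'n" and A :: "real^'n^'n"
  assumes "0 < measure (gaussian_vec mu A) {x. x $ q < x $ p}"
    and "0 < measure (gaussian_vec mu A) {x. x $ p < x $ q}"
  shows "A $ p \<noteq> A $ q"
proof
  assume "A $ p = A $ q"
  then have diff: "(mu + A *v z) $ p - (mu + A *v z) $ q = mu $ p - mu $ q" for z
    by (simp add: matrix_vector_mult_def)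
  show False
  proof (cases "mu $ p \<le> mu $ q")
    case True
    then have "measure (gaussian_vec mu A) {x. x $ q < x $ p} = 0"
      using diff by (intro measure_gaussian_vec_eq_0[OF events_gaussian_vec_less]) (simp add: not_less)
    with assms(1) show False
      by simp
  next
    case False
    then have "measure (gaussian_vec mu A) {x. x $ p < x $ q} = 0"
      using diff by (intro measure_gaussian_vec_eq_0[OF events_gaussian_vec_less]) (simp add: not_less)
    with assms(2) show False
      by simp
  qed
qed

lemma gaussian_vec_row_dist_bound:
  fixes mu :: "real^'n" and A :: "real^'n^'n"
  assumes jk: "A $ j \<noteq> A $ k" and \<gamma>: "0 < \<gamma>"
    and kji: "\<gamma> \<le> measure (gaussian_vec mu A) {x. x $ j < x $ k \<and> x $ i < x $ j}"
    and jik: "\<gamma> \<le> measure (gaussian_vec mu A) {x. x $ i < x $ j \<and> x $ k < x $ i}"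
  shows "pi * \<gamma>\<^sup>2 * (norm (A $ i - A $ k))\<^sup>2 \<le> 16 * (norm (A $ j - A $ k))\<^sup>2 * ln (2 / \<gamma>)"
proof -
  interpret G: prob_space "gaussian_vec mu A"
    by (rule prob_space_gaussian_vec)
  show ?thesis
  proof (cases "A $ i = A $ k")
    case True
    have "\<gamma> \<le> 1"
      using kji G.prob_le_1 order_trans by blast
    with True \<gamma> show ?thesis
      by simp
  next
    case False
    show ?thesis
    proof (rule G.normal_sd_le_of_prob_between)
      show "distributed (gaussian_vec mu A) lborel (\<lambda>x. x $ j - x $ k)
          (normal_density (mu $ j - mu $ k) (norm (A $ j - A $ k)))"
        by (rule gaussian_vec_diff_distributed[OF jk])
      show "distributed (gaussian_vec mu A) lborel (\<lambda>x. x $ i - x $ k)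
          (normal_density (mu $ i - mu $ k) (norm (A $ i - A $ k)))"
        by (rule gaussian_vec_diff_distributed[OF False])
      show "\<gamma> \<le> G.prob {x\<in>space (gaussian_vec mu A). x $ j - x $ k < 0}"
        using order_trans[OF kji G.finite_measure_mono[OF _ events_gaussian_vec_less]] by auto
      show "\<gamma> \<le> G.prob {x\<in>space (gaussian_vec mu A). 0 < x $ i - x $ k \<and> x $ i - x $ k < x $ j - x $ k}"
        using jik by (simp add: conj_commute)
    qed (use jk False \<gamma> in auto)
  qed
qed

lemma gaussian_vec_row_norm_bound:
  fixes mu :: "real^'n" and A :: "real^'n^'n"
  assumes distinct: "i \<noteq> j" "i \<noteq> k" "j \<noteq> k"
    and small: "norm (A $ j) \<le> 2" "norm (A $ k) \<le> 2"
    and \<gamma>: "0 < \<gamma>" "\<gamma> < 1"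
    and obs: "\<forall>i j k. i \<noteq> j \<and> j \<noteq> k \<and> i \<noteq> k \<longrightarrow>
               measure (gaussian_vec mu A) {x. x $ i > x $ j \<and> x $ j > x $ k} \<ge> \<gamma>"
  shows "(norm (A $ i))\<^sup>2 \<le> 100 * ln (8 / \<gamma>) / \<gamma>\<^sup>2"
proof -
  interpret G: prob_space "gaussian_vec mu A"
    by (rule prob_space_gaussian_vec)
  have kji: "\<gamma> \<le> G.prob {x. x $ j < x $ k \<and> x $ i < x $ j}"
    and jik: "\<gamma> \<le> G.prob {x. x $ i < x $ j \<and> x $ k < x $ i}"
    using obs distinct by auto
  have "{x::real^'n. x $ i < x $ j \<and> x $ k < x $ i} \<subseteq> {x. x $ k < x $ j}"
    by auto
  then have "\<gamma> \<le> G.prob {x. x $ j < x $ k}" "\<gamma> \<le> G.prob {x. x $ k < x $ j}"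
    using order_trans[OF kji G.finite_measure_mono[OF _ events_gaussian_vec_less]]
      order_trans[OF jik G.finite_measure_mono[OF _ events_gaussian_vec_less]] by auto
  then have jk: "A $ j \<noteq> A $ k"
    using \<gamma> by (intro gaussian_vec_rows_neq[where mu = mu]) auto
  have "norm (A $ j - A $ k) \<le> 4"
    using norm_triangle_ineq4[of "A $ j" "A $ k"] small by simp
  moreover have "norm (A $ i) \<le> norm (A $ i - A $ k) + 2"
    using norm_triangle_sub[of "A $ i" "A $ k"] small by simp
  ultimately show ?thesis
    using gaussian_vec_row_dist_bound[OF jk \<gamma>(1) kji jik] \<gamma>
    by (intro sq_le_100_ln_div_sq[where \<sigma> = "norm (A $ i - A $ k)" and \<tau> = "norm (A $ j - A $ k)"]) auto
qed

lemma diag_mult_transpose: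
  fixes A :: "real^'n^'m"
  shows "(A ** transpose A) $ l $ l = (norm (A $ l))\<^sup>2"
  by (simp add: power2_norm_eq_inner matrix_matrix_mult_def transpose_def inner_vec_def)

lemma obtain_two_distinct_avoiding:
  assumes "finite S" "3 \<le> card S"
  obtains j k where "j \<in> S" "k \<in> S" "j \<noteq> i" "k \<noteq> i" "j \<noteq> k"
proof -
  have "\<not> card (S - {i}) \<le> Suc 0"
    using assms card_Diff_singleton_if[of S i] by (cases "i \<in> S") auto
  then show ?thesis
    using that assms(1) by (auto simp: card_le_Suc0_iff_eq)
qed

theorem lemma10:
  fixes mu :: "real^'n::finite" and Sigma A :: "real^'n^'n" and \<gamma> :: real
  assumes n3: "CARD('n) \<ge> 3"
    and sym: "transpose Sigma = Sigma"
    and psd: "\<forall>v. v \<bullet> (Sigma *v v) \<ge> 0"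
    and sqrt: "A ** transpose A = Sigma"
    and mean0: "(\<Sum>i\<in>UNIV. mu $ i) = 0"
    and ker1: "Sigma *v (\<chi> i. 1) = 0"
    and tr: "trace Sigma = real CARD('n)"
    and rk: "rank Sigma = CARD('n) - 1"
    and \<gamma>: "0 < \<gamma>" "\<gamma> < 1"
    and obs: "\<forall>i j k. i \<noteq> j \<and> j \<noteq> k \<and> i \<noteq> k \<longrightarrow>
               measure (gaussian_vec mu A) {x. x $ i > x $ j \<and> x $ j > x $ k} \<ge> \<gamma>"
  shows "\<forall>i. Sigma $ i $ i \<le> 100 * ln (8 / \<gamma>) / \<gamma>\<^sup>2"
proof
  fix i
  have diag: "Sigma $ l $ l = (norm (A $ l))\<^sup>2" for l
    using diag_mult_transpose[of A l] by (simp add: sqrt)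
  have "(\<Sum>l\<in>UNIV. (norm (A $ l))\<^sup>2) = real (card (UNIV :: 'n set))"
    using tr by (simp add: trace_def diag)
  then have many_small: "3 \<le> card {l. (norm (A $ l))\<^sup>2 \<le> 3}"
    using three_le_card_le_3[of UNIV "\<lambda>l. (norm (A $ l))\<^sup>2"] n3 by simp
  obtain j k where jk: "(norm (A $ j))\<^sup>2 \<le> 3" "(norm (A $ k))\<^sup>2 \<le> 3" "i \<noteq> j" "i \<noteq> k" "j \<noteq> k"
    by (rule obtain_two_distinct_avoiding[OF finite many_small, of i]) auto
  have "norm (A $ l) \<le> 2" if "(norm (A $ l))\<^sup>2 \<le> 3" for l
  proof (rule power2_le_imp_le)
    show "(norm (A $ l))\<^sup>2 \<le> 2\<^sup>2"
      using that by simp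
  qed simp
  then have "norm (A $ j) \<le> 2" "norm (A $ k) \<le> 2"
    using jk(1,2) by blast+
  from gaussian_vec_row_norm_bound[OF jk(3-5) this \<gamma> obs]
  have "(norm (A $ i))\<^sup>2 \<le> 100 * ln (8 / \<gamma>) / \<gamma>\<^sup>2" .
  then show "Sigma $ i $ i \<le> 100 * ln (8 / \<gamma>) / \<gamma>\<^sup>2"
    by (simp add: diag)
qed

end
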